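(* Let $n,m\ge 1$, $a\in\mathbb{R}^n$, $d\in\mathbb{R}^m$ with $\|a\|\le\|d\|$ and $m>1$. Let $$H=\{(x,y)\in\mathbb{R}^{n+m} : a^\mathsf{T} x+d^\mathsf{T} y=-1\},\qquad S_{\le 0}=\{(x,y)\in\mathbb{R}^{n+m} : \|x\|\le\|y\|,\ a^\mathsf{T} x+d^\mathsf{T} y\le 0\}.$$ Let $(\bar x,\bar y)\in\mathbb{R}^{n+m}$ satisfy $\|\bar x\|>\|\bar y\|$ and $a^\mathsf{T}\bar x+d^\mathsf{T}\bar y=-1$, and let $\lambda=\bar x/\|\bar x\|$. Define $$G(\lambda)=\{\beta\in\mathbb{R}^m : \|\beta\|=1,\ a^\mathsf{T}\lambda+d^\mathsf{T}\beta\le 0\},\qquad C_{G(\lambda)}=\{(x,y)\in\mathbb{R}^{n+m} : -\lambda^\mathsf{T} x+\beta^\mathsf{T} y\le 0\ \ \forall \beta\in G(\lambda)\}.$$ Then $C_{G(\lambda)}$ is maximal $S_{\le 0}$-free with respect to $H$, and $(\bar x,\bar y)\in\operatorname{int}(C_{G(\lambda)})$.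
   Context: $\|\cdot\|$ is the Euclidean norm. For a closed set $S\subseteq\mathbb{R}^N$, a convex set $C\subseteq\mathbb{R}^N$ is $S$-free if $\operatorname{int}(C)\cap S=\emptyset$. Given an affine hyperplane $H$, a closed convex set $C$ is $S$-free with respect to $H$ if $C\cap H$ is $(S\cap H)$-free with respect to the induced topology of $H$ (i.e. the interior of $C\cap H$ relative to $H$ does not meet $S$); it is maximal $S$-free with respect to $H$ if for every closed convex $C'\supseteq C$ that is $S$-free with respect to $H$ one has $C'\cap H\subseteq C\cap H$. *)

theory Defs
  imports "HOL-Analysis.Analysis"
begin

definition S_free_wrt :: "'a::real_normed_vector set \<Rightarrow> 'a set \<Rightarrow> 'a set \<Rightarrow> bool" where
  "S_free_wrt H S C \<longleftrightarrow> closed C \<and> convex C \<and>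
     ((top_of_set H) interior_of (C \<inter> H)) \<inter> (S \<inter> H) = {}"

definition max_S_free_wrt :: "'a::real_normed_vector set \<Rightarrow> 'a set \<Rightarrow> 'a set \<Rightarrow> bool" where
  "max_S_free_wrt H S C \<longleftrightarrow> S_free_wrt H S C \<and>
     (\<forall>C'. C \<subseteq> C' \<and> S_free_wrt H S C' \<longrightarrow> C' \<inter> H \<subseteq> C \<inter> H)"

end

theory Submission
  imports Defs
begin

text \<open>The set \<open>C\<close> is an intersection of closed half-spaces and contains the open cone
  \<open>\<parallel>y\<parallel> < \<lambda>\<cdot>x\<close>, to which \<open>(x\<^sub>b, y\<^sub>b)\<close> belongs. Let \<open>(x, y) \<in> S \<inter> H\<close> and \<open>\<beta>\<^sub>0 = y/\<parallel>y\<parallel>\<close>.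
  If \<open>\<beta>\<^sub>0 \<in> G\<close>, the constraint of \<open>\<beta>\<^sub>0\<close> is tight at \<open>(x, y)\<close>, so \<open>(x, y)\<close> lies on the
  relative boundary of \<open>C \<inter> H\<close>. Otherwise \<open>\<beta>\<^sub>0\<close> is outside the spherical cap \<open>G\<close>, and
  \<open>\<parallel>a\<parallel> \<le> \<parallel>d\<parallel>\<close> forces the angle between \<open>\<beta>\<^sub>0\<close> and the centre of the cap to be less
  than the sum of the cap radius and the angle \<open>arccos (\<lambda>\<cdot>x / \<parallel>y\<parallel>)\<close>; the point of \<open>G\<close>
  closest to \<open>\<beta>\<^sub>0\<close> then gives a constraint violated by \<open>(x, y)\<close>. For maximality, a point
  \<open>p \<in> H\<close> violating the constraint of some \<open>\<beta> \<in> G\<close> is moved along \<open>(\<lambda>, \<beta>)\<close> until it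
  enters the cone \<open>\<parallel>x\<parallel> \<le> \<parallel>y\<parallel>\<close>, and slightly towards \<open>(x\<^sub>b, y\<^sub>b)\<close>; rescaled onto \<open>H\<close>, it
  is a point of \<open>S\<close> in the interior of every convex \<open>C' \<supseteq> C\<close> containing \<open>p\<close>.\<close>

lemma cos_lt_cos_diff:
  fixes \<phi> \<psi> \<tau> :: real
  assumes "0 \<le> \<psi>" "\<psi> < \<phi>" "\<phi> \<le> pi" "0 \<le> \<tau>" "\<tau> \<le> pi"
    and "cos (\<psi> + \<tau>) < cos \<phi>"
  shows "cos \<tau> < cos (\<phi> - \<psi>)"
proof -
  have "\<phi> < \<psi> + \<tau>"
  proof (cases "\<psi> + \<tau> \<le> pi")
    case True
    then show ?thesis using assms cos_mono_less_eq[of "\<psi> + \<tau>" \<phi>] by linarith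
  next
    case False
    then show ?thesis using assms by linarith
  qed
  then show ?thesis using assms cos_mono_less_eq[of \<tau> "\<phi> - \<psi>"] by linarith
qed

lemma unit_orthogonal_decomposition:
  fixes u w :: "'a::euclidean_space"
  assumes "2 \<le> DIM('a)" "norm u = 1" "norm w = 1"
  obtains v where "norm v = 1" "u \<bullet> v = 0" "w = (w \<bullet> u) *\<^sub>R u + sqrt (1 - (w \<bullet> u)\<^sup>2) *\<^sub>R v"
proof -
  define w' where "w' = w - (w \<bullet> u) *\<^sub>R u"
  have uu: "u \<bullet> u = 1" and ww: "w \<bullet> w = 1"
    using assms(2,3) by (simp_all add: dot_square_norm)
  have "u \<bullet> w' = 0"
    by (simp add: w'_def inner_diff_right uu inner_commute)
  have norm_w': "norm w' = sqrt (1 - (w \<bullet> u)\<^sup>2)"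
    by (simp add: norm_eq_sqrt_inner w'_def inner_diff_left inner_diff_right uu ww
        inner_commute power2_eq_square)
  show thesis
  proof (cases "w' = 0")
    case True
    obtain v where "v \<noteq> 0" "orthogonal u v"
      using orthogonal_to_vector_exists assms(1) by blast
    then have "norm (v /\<^sub>R norm v) = 1" "u \<bullet> (v /\<^sub>R norm v) = 0"
      by (simp_all add: orthogonal_def)
    moreover have "sqrt (1 - (w \<bullet> u)\<^sup>2) = 0"
      using True norm_w' by simp
    ultimately show thesis
      using True by (intro that[of "v /\<^sub>R norm v"]) (auto simp: w'_def)
  next
    case False
    then show thesis
      using \<open>u \<bullet> w' = 0\<close>
      by (intro that[of "w' /\<^sub>R norm w'"]) (simp_all add: norm_w'[symmetric] w'_def)
  qed
qed

lemma exists_unit_inner_cos_diff_arccos: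
  fixes u w :: "'a::euclidean_space"
  assumes "2 \<le> DIM('a)" "norm u = 1" "norm w = 1" "\<bar>\<alpha>\<bar> \<le> 1"
  obtains \<beta> where "norm \<beta> = 1" "\<beta> \<bullet> u = \<alpha>" "\<beta> \<bullet> w = cos (arccos (w \<bullet> u) - arccos \<alpha>)"
proof -
  obtain v where v: "norm v = 1" "u \<bullet> v = 0"
    and w: "w = (w \<bullet> u) *\<^sub>R u + sqrt (1 - (w \<bullet> u)\<^sup>2) *\<^sub>R v"
    using unit_orthogonal_decomposition assms(1-3) .
  have uu: "u \<bullet> u = 1" and vv: "v \<bullet> v = 1" and vu: "v \<bullet> u = 0"
    using assms(2) v by (simp_all add: dot_square_norm inner_commute)
  have "\<bar>w \<bullet> u\<bar> \<le> 1"
    using Cauchy_Schwarz_ineq2[of w u] assms(2,3) by simp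
  define \<beta> where "\<beta> = \<alpha> *\<^sub>R u + sqrt (1 - \<alpha>\<^sup>2) *\<^sub>R v"
  show thesis
  proof (rule that)
    have "\<alpha> * \<alpha> \<le> 1"
      using assms(4) abs_square_le_1[of \<alpha>] by (simp add: power2_eq_square)
    then have "\<beta> \<bullet> \<beta> = 1"
      by (simp add: \<beta>_def inner_add_left inner_add_right uu vv v(2) vu power2_eq_square)
    then show "norm \<beta> = 1"
      by (simp add: norm_eq_sqrt_inner)
    show "\<beta> \<bullet> u = \<alpha>"
      by (simp add: \<beta>_def inner_add_left uu vu)
    have "\<beta> \<bullet> w = \<alpha> * (w \<bullet> u) + sqrt (1 - \<alpha>\<^sup>2) * sqrt (1 - (w \<bullet> u)\<^sup>2)"
      by (subst w) (simp add: \<beta>_def inner_add_left inner_add_right uu vv v(2) vu)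
    then show "\<beta> \<bullet> w = cos (arccos (w \<bullet> u) - arccos \<alpha>)"
      using assms(4) \<open>\<bar>w \<bullet> u\<bar> \<le> 1\<close> by (simp add: cos_diff sin_arccos mult.commute)
  qed
qed

lemma sqrt_one_minus_square_div:
  fixes A D :: real
  assumes "0 < D"
  shows "D * sqrt (1 - (A / D)\<^sup>2) = sqrt (D\<^sup>2 - A\<^sup>2)"
proof -
  have "1 - (A / D)\<^sup>2 = (D\<^sup>2 - A\<^sup>2) / D\<^sup>2"
    using assms by (simp add: field_simps power_divide)
  then show ?thesis
    using assms by (simp add: real_sqrt_divide)
qed

lemma inner_ge_cos_add_arccos:
  fixes l a x :: "'a::real_inner"
  assumes l: "norm l = 1" and a: "norm a \<le> D" and x: "norm x \<le> r" and "0 < D" "0 < r"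
  shows "D * r * cos (arccos (a \<bullet> l / D) + arccos (l \<bullet> x / r)) \<le> a \<bullet> x"
proof -
  define A s where "A = a \<bullet> l" and "s = l \<bullet> x"
  define a' x' where "a' = a - A *\<^sub>R l" and "x' = x - s *\<^sub>R l"
  have ll: "l \<bullet> l = 1"
    using l by (simp add: dot_square_norm)
  have A: "\<bar>A\<bar> \<le> D" and s: "\<bar>s\<bar> \<le> r"
    using Cauchy_Schwarz_ineq2[of a l] Cauchy_Schwarz_ineq2[of l x] l a x
    by (simp_all add: A_def s_def)
  have split: "a \<bullet> x = A * s + a' \<bullet> x'"
    by (simp add: a'_def x'_def inner_diff_left inner_diff_right ll A_def s_def inner_commute)
  have "a' \<bullet> a' = (norm a)\<^sup>2 - A\<^sup>2"
    by (simp add: a'_def inner_diff_left inner_diff_right ll A_def inner_commute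
        power2_norm_eq_inner[unfolded power2_eq_square] power2_eq_square)
  also have "\<dots> \<le> D\<^sup>2 - A\<^sup>2"
    using a by (simp add: power_mono)
  finally have a': "norm a' \<le> sqrt (D\<^sup>2 - A\<^sup>2)"
    by (simp add: norm_eq_sqrt_inner)
  have "x' \<bullet> x' = (norm x)\<^sup>2 - s\<^sup>2"
    by (simp add: x'_def inner_diff_left inner_diff_right ll s_def inner_commute
        power2_norm_eq_inner[unfolded power2_eq_square] power2_eq_square)
  also have "\<dots> \<le> r\<^sup>2 - s\<^sup>2"
    using x by (simp add: power_mono)
  finally have x': "norm x' \<le> sqrt (r\<^sup>2 - s\<^sup>2)"
    by (simp add: norm_eq_sqrt_inner)
  have "- (a' \<bullet> x') \<le> norm a' * norm x'"
    using Cauchy_Schwarz_ineq2[of a' x'] by linarith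
  also have "\<dots> \<le> sqrt (D\<^sup>2 - A\<^sup>2) * sqrt (r\<^sup>2 - s\<^sup>2)"
    using a' x' by (simp add: mult_mono')
  finally have "A * s - sqrt (D\<^sup>2 - A\<^sup>2) * sqrt (r\<^sup>2 - s\<^sup>2) \<le> a \<bullet> x"
    using split by linarith
  moreover have "D * r * cos (arccos (A / D) + arccos (s / r))
      = A * s - sqrt (D\<^sup>2 - A\<^sup>2) * sqrt (r\<^sup>2 - s\<^sup>2)"
    using A s \<open>0 < D\<close> \<open>0 < r\<close>
    by (simp add: cos_add sin_arccos divide_le_eq le_divide_eq abs_le_iff field_simps
        flip: sqrt_one_minus_square_div[of D A] sqrt_one_minus_square_div[of r s])
  ultimately show ?thesis
    by (simp add: A_def s_def)
qed

lemma not_in_interior_of_halfspace_within_hyperplane: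
  fixes n g p :: "'a::real_inner"
  assumes "g \<bullet> p = b" and not_parallel: "\<And>\<mu>. g \<noteq> \<mu> *\<^sub>R n"
  shows "p \<notin> top_of_set {q. n \<bullet> q = c} interior_of {q. g \<bullet> q \<le> b}"
proof
  let ?H = "{q. n \<bullet> q = c}"
  assume "p \<in> top_of_set ?H interior_of {q. g \<bullet> q \<le> b}"
  then obtain U where U: "openin (top_of_set ?H) U" "p \<in> U" "U \<subseteq> {q. g \<bullet> q \<le> b}"
    by (auto simp: interior_of_def)
  then obtain e where "e > 0" and e: "\<And>q. q \<in> ?H \<Longrightarrow> dist q p < e \<Longrightarrow> q \<in> U"
    by (meson openin_euclidean_subtopology_iff)
  have "p \<in> ?H"
    using U openin_subset by fastforce
  define h where "h = g - (g \<bullet> n / (n \<bullet> n)) *\<^sub>R n"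
  \<comment> \<open>the component of \<open>g\<close> orthogonal to \<open>n\<close>; also correct for \<open>n = 0\<close>, where \<open>h = g\<close> by \<open>x / 0 = 0\<close>\<close>
  have nh: "n \<bullet> h = 0"
    by (cases "n = 0") (simp_all add: h_def inner_diff_right inner_commute)
  have "h \<noteq> 0"
    using not_parallel by (auto simp: h_def)
  have gh: "g \<bullet> h = h \<bullet> h"
    using nh by (simp add: h_def inner_diff_left inner_commute)
  define q where "q = p + (e / (2 * norm h)) *\<^sub>R h"
  have "q \<in> ?H"
    using \<open>p \<in> ?H\<close> nh by (simp add: q_def inner_add_right)
  moreover have "dist q p < e"
    using \<open>e > 0\<close> \<open>h \<noteq> 0\<close> by (simp add: q_def dist_norm)
  ultimately have "g \<bullet> q \<le> b"
    using e U(3) by blast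
  moreover have "g \<bullet> q = b + (e / (2 * norm h)) * (h \<bullet> h)"
    using assms(1) gh by (simp add: q_def inner_add_right)
  moreover have "0 < (e / (2 * norm h)) * (h \<bullet> h)"
    using \<open>e > 0\<close> \<open>h \<noteq> 0\<close> by simp
  ultimately show False
    by linarith
qed

lemma exists_shift_norm_le:
  fixes l x :: "'a::real_inner" and b y :: "'b::real_inner"
  assumes "norm l = 1" "norm b = 1" "l \<bullet> x < b \<bullet> y"
  obtains N where "0 \<le> N" "norm (x + N *\<^sub>R l) \<le> norm (y + N *\<^sub>R b)"
proof
  define \<delta> where "\<delta> = b \<bullet> y - l \<bullet> x"
  define N where "N = \<bar>b \<bullet> y\<bar> + (x \<bullet> x) / (2 * \<delta>)"
  have "\<delta> > 0"
    using assms(3) by (simp add: \<delta>_def)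
  then have N: "x \<bullet> x \<le> 2 * N * \<delta>" "\<bar>b \<bullet> y\<bar> \<le> N"
    by (simp_all add: N_def field_simps)
  then show "0 \<le> N"
    by linarith
  have ll: "l \<bullet> l = 1" and bb: "b \<bullet> b = 1"
    using assms(1,2) by (simp_all add: dot_square_norm)
  have "(norm (x + N *\<^sub>R l))\<^sup>2 = x \<bullet> x + 2 * N * (l \<bullet> x) + N\<^sup>2"
    unfolding power2_norm_eq_inner
    by (simp add: inner_add_left inner_add_right ll inner_commute power2_eq_square)
  also have "\<dots> \<le> (b \<bullet> y)\<^sup>2 + 2 * N * (b \<bullet> y) + N\<^sup>2"
  proof -
    have "2 * N * \<delta> = 2 * N * (b \<bullet> y) - 2 * N * (l \<bullet> x)"
      by (simp add: \<delta>_def algebra_simps)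
    then show ?thesis
      using N(1) zero_le_power2[of "b \<bullet> y"] by linarith
  qed
  also have "\<dots> = (b \<bullet> (y + N *\<^sub>R b))\<^sup>2"
    by (simp add: inner_add_right bb power2_eq_square algebra_simps)
  finally have "(norm (x + N *\<^sub>R l))\<^sup>2 \<le> (b \<bullet> (y + N *\<^sub>R b))\<^sup>2" .
  moreover have "0 \<le> b \<bullet> (y + N *\<^sub>R b)"
    using N(2) by (simp add: inner_add_right bb)
  ultimately have "norm (x + N *\<^sub>R l) \<le> b \<bullet> (y + N *\<^sub>R b)"
    by (rule power2_le_imp_le)
  also have "\<dots> \<le> norm (y + N *\<^sub>R b)"
    using norm_cauchy_schwarz[of b "y + N *\<^sub>R b"] assms(2) by simp
  finally show "norm (x + N *\<^sub>R l) \<le> norm (y + N *\<^sub>R b)" .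
qed

lemma mem_interior_convex_combination:
  fixes C :: "'a::euclidean_space set"
  assumes "convex C" "p \<in> C" "v \<in> interior C" "0 < k"
  shows "(1 / (1 + k)) *\<^sub>R (p + k *\<^sub>R v) \<in> interior C"
proof -
  have "p - (k / (1 + k)) *\<^sub>R (p - v) \<in> interior C"
    using \<open>0 < k\<close> by (intro mem_interior_convex_shrink[OF assms(1,3,2)]) simp_all
  also have "p - (k / (1 + k)) *\<^sub>R (p - v) = (1 - k / (1 + k)) *\<^sub>R p + (k / (1 + k)) *\<^sub>R v"
    by (simp add: algebra_simps)
  also have "1 - k / (1 + k) = 1 / (1 + k)"
    using \<open>0 < k\<close> by (simp add: field_simps)
  also have "(1 / (1 + k)) *\<^sub>R p + (k / (1 + k)) *\<^sub>R v = (1 / (1 + k)) *\<^sub>R (p + k *\<^sub>R v)"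
    by (simp add: scaleR_add_right)
  finally show ?thesis .
qed

definition hyperplane_H :: "'a::real_inner \<Rightarrow> 'b::real_inner \<Rightarrow> ('a \<times> 'b) set" where
  "hyperplane_H a d = {(x, y). a \<bullet> x + d \<bullet> y = -1}"

definition set_S_le0 :: "'a::real_inner \<Rightarrow> 'b::real_inner \<Rightarrow> ('a \<times> 'b) set" where
  "set_S_le0 a d = {(x, y). norm x \<le> norm y \<and> a \<bullet> x + d \<bullet> y \<le> 0}"

definition cap_G :: "'a::real_inner \<Rightarrow> 'b::real_inner \<Rightarrow> 'a \<Rightarrow> 'b set" where
  "cap_G a d l = {\<beta>. norm \<beta> = 1 \<and> a \<bullet> l + d \<bullet> \<beta> \<le> 0}"

definition cone_C :: "'a::real_inner \<Rightarrow> 'b::real_inner \<Rightarrow> 'a \<Rightarrow> ('a \<times> 'b) set" where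
  "cone_C a d l = {(x, y). \<forall>\<beta>\<in>cap_G a d l. - (l \<bullet> x) + \<beta> \<bullet> y \<le> 0}"

lemma hyperplane_H_eq: "hyperplane_H a d = {q. (a, d) \<bullet> q = -1}"
  by (auto simp: hyperplane_H_def)

lemma cone_C_eq_Inter_halfspaces: "cone_C a d l = (\<Inter>\<beta>\<in>cap_G a d l. {q. (- l, \<beta>) \<bullet> q \<le> 0})"
  by (auto simp: cone_C_def)

lemma closed_cone_C: "closed (cone_C a d l)"
  unfolding cone_C_eq_Inter_halfspaces by (auto intro!: closed_INT closed_halfspace_le)

lemma convex_cone_C: "convex (cone_C a d l)"
  unfolding cone_C_eq_Inter_halfspaces by (auto intro!: convex_INT convex_halfspace_le)

lemma mem_interior_cone_C:
  fixes l x :: "'a::real_inner" and y :: "'b::real_inner"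
  assumes "norm y < l \<bullet> x"
  shows "(x, y) \<in> interior (cone_C a d l)"
proof -
  let ?K = "{q. norm (snd q) < l \<bullet> fst q}"
  have "open ?K"
    by (intro open_Collect_less continuous_intros)
  have "?K \<subseteq> cone_C a d l"
  proof (clarsimp simp: cone_C_def)
    fix x' :: 'a and y' \<beta> :: 'b
    assume "norm y' < l \<bullet> x'" "\<beta> \<in> cap_G a d l"
    then show "\<beta> \<bullet> y' \<le> l \<bullet> x'"
      using norm_cauchy_schwarz[of \<beta> y'] by (simp add: cap_G_def)
  qed
  then have "?K \<subseteq> interior (cone_C a d l)"
    using \<open>open ?K\<close> by (rule interior_maximal)
  then show ?thesis
    using assms by auto
qed

lemma not_mem_cone_C_outside_cap:
  fixes a l x :: "'a::real_inner" and d y :: "'b::euclidean_space"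
  assumes "2 \<le> DIM('b)" and l: "norm l = 1" and ad: "norm a \<le> norm d"
    and xy: "norm x \<le> norm y" and H: "a \<bullet> x + d \<bullet> y = -1"
    and outside: "y /\<^sub>R norm y \<notin> cap_G a d l"
  shows "(x, y) \<notin> cone_C a d l"
proof -
  have "y \<noteq> 0" "d \<noteq> 0"
    using xy ad H by auto
  define D r where "D = norm d" and "r = norm y"
  have "0 < D" "0 < r"
    using \<open>y \<noteq> 0\<close> \<open>d \<noteq> 0\<close> by (simp_all add: D_def r_def)
  define u w where "u = - (d /\<^sub>R D)" and "w = y /\<^sub>R r"
  have "norm u = 1" "norm w = 1" and d: "d = - D *\<^sub>R u" and y: "y = r *\<^sub>R w"
    using \<open>0 < D\<close> \<open>0 < r\<close> by (simp_all add: u_def w_def D_def r_def)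
  define \<alpha> t c where "\<alpha> = a \<bullet> l / D" and "t = l \<bullet> x / r" and "c = w \<bullet> u"
  \<comment> \<open>\<open>G\<close> is the cap of angular radius \<open>arccos \<alpha>\<close> around \<open>u\<close>. The bound on \<open>a \<bullet> x\<close> puts
    \<open>w\<close> at angular distance less than \<open>arccos \<alpha> + arccos t\<close> from \<open>u\<close>, so the point of the cap
    on the great circle from \<open>u\<close> to \<open>w\<close> is within angle \<open>arccos t\<close> of \<open>w\<close>.\<close>
  have "\<bar>\<alpha>\<bar> \<le> 1" "\<bar>t\<bar> \<le> 1" "\<bar>c\<bar> \<le> 1"
    using Cauchy_Schwarz_ineq2[of a l] Cauchy_Schwarz_ineq2[of l x] Cauchy_Schwarz_ineq2[of w u]
      \<open>0 < D\<close> \<open>0 < r\<close> l ad xy \<open>norm u = 1\<close> \<open>norm w = 1\<close>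
    by (simp_all add: \<alpha>_def t_def c_def D_def r_def divide_le_eq abs_divide)
  have "0 < a \<bullet> l + d \<bullet> w"
    using outside \<open>norm w = 1\<close> by (simp add: cap_G_def w_def r_def)
  then have "c < \<alpha>"
    using \<open>0 < D\<close> by (simp add: d \<alpha>_def c_def field_simps inner_commute)
  have "D * r * cos (arccos \<alpha> + arccos t) \<le> a \<bullet> x"
    unfolding \<alpha>_def t_def using l ad xy \<open>0 < D\<close> \<open>0 < r\<close>
    by (intro inner_ge_cos_add_arccos) (simp_all add: D_def r_def)
  also have "a \<bullet> x < D * r * c"
    using H by (simp add: d y c_def inner_commute algebra_simps)
  finally have "cos (arccos \<alpha> + arccos t) < cos (arccos c)"
    using \<open>0 < D\<close> \<open>0 < r\<close> \<open>\<bar>c\<bar> \<le> 1\<close> by simp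
  then have "cos (arccos t) < cos (arccos c - arccos \<alpha>)"
    using \<open>\<bar>\<alpha>\<bar> \<le> 1\<close> \<open>\<bar>t\<bar> \<le> 1\<close> \<open>\<bar>c\<bar> \<le> 1\<close> \<open>c < \<alpha>\<close>
    by (intro cos_lt_cos_diff) (auto intro: arccos_less_arccos arccos_lbound arccos_ubound)
  moreover obtain \<beta> where \<beta>: "norm \<beta> = 1" "\<beta> \<bullet> u = \<alpha>" "\<beta> \<bullet> w = cos (arccos c - arccos \<alpha>)"
    using exists_unit_inner_cos_diff_arccos assms(1) \<open>norm u = 1\<close> \<open>norm w = 1\<close> \<open>\<bar>\<alpha>\<bar> \<le> 1\<close>
    unfolding c_def by blast
  ultimately have "l \<bullet> x < \<beta> \<bullet> y"
    using \<open>\<bar>t\<bar> \<le> 1\<close> \<open>0 < r\<close> by (simp add: y t_def field_simps)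
  moreover have "\<beta> \<in> cap_G a d l"
    using \<beta> \<open>0 < D\<close> by (simp add: cap_G_def d \<alpha>_def inner_commute)
  ultimately show ?thesis
    unfolding cone_C_eq_Inter_halfspaces by force
qed

lemma S_free_cone_C:
  fixes a l :: "'a::real_inner" and d :: "'b::euclidean_space"
  assumes "2 \<le> DIM('b)" "norm l = 1" "norm a \<le> norm d"
  shows "S_free_wrt (hyperplane_H a d) (set_S_le0 a d) (cone_C a d l)"
  unfolding S_free_wrt_def
proof (intro conjI closed_cone_C convex_cone_C equals0I)
  let ?H = "hyperplane_H a d"
  fix q assume q: "q \<in> (top_of_set ?H interior_of (cone_C a d l \<inter> ?H)) \<inter> (set_S_le0 a d \<inter> ?H)"
  then obtain x y where [simp]: "q = (x, y)" and xy: "norm x \<le> norm y" and H: "a \<bullet> x + d \<bullet> y = -1"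
    by (auto simp: set_S_le0_def hyperplane_H_def)
  have "q \<in> cone_C a d l"
    using q interior_of_subset[of "top_of_set ?H" "cone_C a d l \<inter> ?H"] by blast
  have "y \<noteq> 0"
    using xy H by auto
  define w where "w = y /\<^sub>R norm y"
  have "norm w = 1" "w \<bullet> y = norm y"
    using \<open>y \<noteq> 0\<close> by (simp_all add: w_def dot_square_norm power2_eq_square)
  show False
  proof (cases "w \<in> cap_G a d l")
    case True
    have "w \<bullet> y \<le> l \<bullet> x"
      using \<open>q \<in> cone_C a d l\<close> True by (simp add: cone_C_def)
    moreover have "l \<bullet> x \<le> norm x"
      using norm_cauchy_schwarz[of l x] assms(2) by simp
    ultimately have tight: "(- l, w) \<bullet> q = 0"
      using xy \<open>w \<bullet> y = norm y\<close> by simp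
    have "\<And>\<mu>. (- l, w) \<noteq> \<mu> *\<^sub>R (a, d)"
    proof
      fix \<mu> assume "(- l, w) = \<mu> *\<^sub>R (a, d)"
      then have "(- l, w) \<bullet> q = \<mu> * (a \<bullet> x + d \<bullet> y)"
        by (simp add: distrib_left)
      then have "(- l, w) \<bullet> q = - \<mu>"
        using H by simp
      then show False
        using tight \<open>(- l, w) = \<mu> *\<^sub>R (a, d)\<close> \<open>norm w = 1\<close> by simp
    qed
    then have "q \<notin> top_of_set ?H interior_of {q. (- l, w) \<bullet> q \<le> 0}"
      unfolding hyperplane_H_eq by (rule not_in_interior_of_halfspace_within_hyperplane[OF tight])
    moreover have "cone_C a d l \<inter> ?H \<subseteq> {q. (- l, w) \<bullet> q \<le> 0}"
      using True unfolding cone_C_eq_Inter_halfspaces by blast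
    ultimately show False
      using q interior_of_mono by blast
  next
    case False
    then show False
      using not_mem_cone_C_outside_cap[OF assms xy H] \<open>q \<in> cone_C a d l\<close> by (simp add: w_def)
  qed
qed

lemma exists_S_le0_in_interior:
  fixes a l xb :: "'a::euclidean_space" and d yb :: "'b::euclidean_space"
  assumes l: "norm l = 1" and bar: "norm yb < l \<bullet> xb" "a \<bullet> xb + d \<bullet> yb = -1"
    and C': "convex C'" "cone_C a d l \<subseteq> C'"
    and p: "p \<in> C' \<inter> hyperplane_H a d" "p \<notin> cone_C a d l"
  obtains z where "z \<in> set_S_le0 a d \<inter> hyperplane_H a d" "z \<in> interior C'"
proof -
  obtain px py where [simp]: "p = (px, py)"
    by fastforce
  obtain \<beta> where "\<beta> \<in> cap_G a d l" and viol: "l \<bullet> px < \<beta> \<bullet> py"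
    using p(2) by (auto simp: cone_C_def)
  then have \<beta>: "norm \<beta> = 1" and \<kappa>: "a \<bullet> l + d \<bullet> \<beta> \<le> 0"
    by (simp_all add: cap_G_def)
  have "\<beta> \<bullet> yb < l \<bullet> xb"
    using norm_cauchy_schwarz[of \<beta> yb] \<beta> bar(1) by simp
  define c where "c = (\<beta> \<bullet> py - l \<bullet> px) / (2 * (l \<bullet> xb - \<beta> \<bullet> yb))"
  \<comment> \<open>so that \<open>p + c (x\<^sub>b, y\<^sub>b)\<close> still violates the constraint of \<open>\<beta>\<close>, by half as much\<close>
  have "0 < c"
    using viol \<open>\<beta> \<bullet> yb < l \<bullet> xb\<close> by (simp add: c_def)
  have "c * (l \<bullet> xb - \<beta> \<bullet> yb) = (\<beta> \<bullet> py - l \<bullet> px) / 2"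
    using \<open>\<beta> \<bullet> yb < l \<bullet> xb\<close> unfolding c_def by (simp add: field_simps)
  then have "l \<bullet> (px + c *\<^sub>R xb) < \<beta> \<bullet> (py + c *\<^sub>R yb)"
    using viol by (simp add: inner_add_right algebra_simps)
  then obtain N where "0 \<le> N"
    and N: "norm (px + c *\<^sub>R xb + N *\<^sub>R l) \<le> norm (py + c *\<^sub>R yb + N *\<^sub>R \<beta>)"
    using exists_shift_norm_le l \<beta> by blast
  define k where "k = c - N * (a \<bullet> l + d \<bullet> \<beta>)"
  have "0 < k"
    using \<open>0 < c\<close> mult_nonneg_nonpos[OF \<open>0 \<le> N\<close> \<kappa>] by (simp add: k_def)
  define W where "W = (c *\<^sub>R xb + N *\<^sub>R l, c *\<^sub>R yb + N *\<^sub>R \<beta>)"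
  have "norm (c *\<^sub>R yb + N *\<^sub>R \<beta>) \<le> c * norm yb + N"
    using norm_triangle_ineq[of "c *\<^sub>R yb" "N *\<^sub>R \<beta>"] \<open>0 < c\<close> \<open>0 \<le> N\<close> \<beta> by simp
  also have "\<dots> < l \<bullet> (c *\<^sub>R xb + N *\<^sub>R l)"
    using bar(1) \<open>0 < c\<close> l by (simp add: inner_add_right dot_square_norm)
  finally have "W /\<^sub>R k \<in> interior (cone_C a d l)"
    using \<open>0 < k\<close> by (simp add: W_def mem_interior_cone_C divide_strict_right_mono)
  then have "W /\<^sub>R k \<in> interior C'"
    using interior_mono[OF C'(2)] by blast
  define z where "z = (1 / (1 + k)) *\<^sub>R (p + W)"
  have z_interior: "z \<in> interior C'"
    using mem_interior_convex_combination[OF C'(1) _ \<open>W /\<^sub>R k \<in> interior C'\<close> \<open>0 < k\<close>] p(1)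
      \<open>0 < k\<close> by (simp add: z_def)
  have "(a, d) \<bullet> W = c * (a \<bullet> xb + d \<bullet> yb) + N * (a \<bullet> l + d \<bullet> \<beta>)"
    by (simp add: W_def inner_add_right algebra_simps)
  then have "(a, d) \<bullet> W = - k"
    using bar(2) by (simp add: k_def)
  then have "(a, d) \<bullet> z = (1 / (1 + k)) * (- 1 - k)"
    using p(1) unfolding z_def inner_scaleR_right inner_add_right by (simp add: hyperplane_H_eq)
  also have "(1 / (1 + k)) * (- 1 - k) = - 1"
    using \<open>0 < k\<close> by (simp add: field_simps)
  finally have z_H: "z \<in> hyperplane_H a d"
    by (simp add: hyperplane_H_eq)
  have "norm (fst z) \<le> norm (snd z)"
    using N \<open>0 < k\<close> by (simp add: z_def W_def add.assoc divide_right_mono)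
  then show thesis
    using z_interior z_H by (intro that) (auto simp: set_S_le0_def hyperplane_H_def)
qed

lemma max_S_free_cone_C:
  fixes a l xb :: "'a::euclidean_space" and d yb :: "'b::euclidean_space"
  assumes "2 \<le> DIM('b)" "norm l = 1" "norm a \<le> norm d"
    and "norm yb < l \<bullet> xb" "a \<bullet> xb + d \<bullet> yb = -1"
  shows "max_S_free_wrt (hyperplane_H a d) (set_S_le0 a d) (cone_C a d l)"
  unfolding max_S_free_wrt_def
proof (intro conjI allI impI S_free_cone_C assms(1-3))
  let ?H = "hyperplane_H a d"
  fix C' assume "cone_C a d l \<subseteq> C' \<and> S_free_wrt ?H (set_S_le0 a d) C'"
  then have C': "convex C'" "cone_C a d l \<subseteq> C'"
    and free: "(top_of_set ?H interior_of (C' \<inter> ?H)) \<inter> (set_S_le0 a d \<inter> ?H) = {}"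
    by (auto simp: S_free_wrt_def)
  have interior_in_H: "?H \<inter> interior C' \<subseteq> top_of_set ?H interior_of (C' \<inter> ?H)"
    by (intro interior_of_maximal openin_open_Int open_interior) (use interior_subset in auto)
  show "C' \<inter> ?H \<subseteq> cone_C a d l \<inter> ?H"
  proof (rule subsetI, rule ccontr)
    fix p assume "p \<in> C' \<inter> ?H" "p \<notin> cone_C a d l \<inter> ?H"
    then obtain z where "z \<in> set_S_le0 a d \<inter> ?H" "z \<in> interior C'"
      using exists_S_le0_in_interior[OF assms(2,4,5) C'] by blast
    then show False
      using interior_in_H free by blast
  qed
qed

theorem theorem8:
  fixes a :: "real^'n" and d :: "real^'m" and xb :: "real^'n" and yb :: "real^'m"
  assumes m_gt1: "CARD('m) > 1"
    and ad: "norm a \<le> norm d"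
    and bar_norm: "norm xb > norm yb"
    and bar_H: "a \<bullet> xb + d \<bullet> yb = -1"
  shows "let H = {(x :: real^'n, y :: real^'m). a \<bullet> x + d \<bullet> y = -1};
             S = {(x :: real^'n, y :: real^'m). norm x \<le> norm y \<and> a \<bullet> x + d \<bullet> y \<le> 0};
             lam = xb /\<^sub>R norm xb;
             G = {\<beta> :: real^'m. norm \<beta> = 1 \<and> a \<bullet> lam + d \<bullet> \<beta> \<le> 0};
             C = {(x :: real^'n, y :: real^'m). \<forall>\<beta>\<in>G. - (lam \<bullet> x) + \<beta> \<bullet> y \<le> 0}
         in max_S_free_wrt H S C \<and> (xb, yb) \<in> interior C"
proof -
  define lam where "lam = xb /\<^sub>R norm xb"
  have "xb \<noteq> 0"
    using bar_norm norm_ge_zero[of yb] by auto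
  then have "norm lam = 1" "lam \<bullet> xb = norm xb"
    by (simp_all add: lam_def dot_square_norm power2_eq_square)
  then have "norm yb < lam \<bullet> xb"
    using bar_norm by simp
  moreover have "2 \<le> DIM(real^'m)"
    using m_gt1 by simp
  ultimately have "max_S_free_wrt (hyperplane_H a d) (set_S_le0 a d) (cone_C a d lam)"
    "(xb, yb) \<in> interior (cone_C a d lam)"
    using max_S_free_cone_C ad bar_H \<open>norm lam = 1\<close> mem_interior_cone_C by blast+
  then show ?thesis
    unfolding Let_def hyperplane_H_def set_S_le0_def cone_C_def cap_G_def lam_def by blast
qed

end
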